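(* Let $G$ be a finite simple graph and $k\ge 0$ an integer. If $Z_k(G)\le k$, then $Z_k(G)=Z(G)$.
   Context: Filling rule: if a filled vertex has exactly one unfilled neighbor (and any number of filled neighbors), that neighbor becomes filled; "applying the filling rule in a subgraph $H$" means applying it with neighborhoods taken in $H$. The $Z_q$-Game on $G$ ($q\ge 0$ an integer): initially all vertices are unfilled; a player repeatedly performs one of the following operations until all vertices are filled: (1) for one token, change any vertex from unfilled to filled; (2) at no cost, apply the filling rule in $G$; (3) if $F$ is the current set of filled vertices and $U_1,\dots,U_k$ are the vertex sets of the connected components of $G[V(G)\setminus F]$ with $k\ge q+1$, the player announces a selection of at least $q+1$ of the $U_i$ to an oracle (an adversary), the oracle returns a nonempty subset $\{U_{i_1},\dots,U_{i_\ell}\}$ of the selected components, and the player may at no cost apply the filling rule in $G[F\cup U_{i_1}\cup\cdots\cup U_{i_\ell}]$. $Z_q(G)$ is the minimum number of tokens with which the player can guarantee that all vertices become filled, regardless of the oracle's responses. The $Z$-Game is the same game with only operations (1) and (2) allowed, and $Z(G)$ (the zero forcing number) is the minimum number of tokens needed there to fill all vertices. *)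

theory Defs
  imports Main
begin

definition simple_graph :: "'a set \<Rightarrow> ('a \<Rightarrow> 'a \<Rightarrow> bool) \<Rightarrow> bool" where
  "simple_graph V E \<longleftrightarrow> finite V \<and> (\<forall>x y. E x y \<longrightarrow> x \<in> V \<and> y \<in> V)
     \<and> (\<forall>x y. E x y \<longrightarrow> E y x) \<and> (\<forall>x. \<not> E x x)"

definition fill_step :: "'a set \<Rightarrow> ('a \<Rightarrow> 'a \<Rightarrow> bool) \<Rightarrow> 'a set \<Rightarrow> 'a set \<Rightarrow> bool" where
  "fill_step W E F F' \<longleftrightarrow> (\<exists>u w. u \<in> F \<and> u \<in> W \<and> w \<in> W \<and> w \<notin> F
       \<and> {x \<in> W. E u x \<and> x \<notin> F} = {w} \<and> F' = insert w F)"

definition unfilled_components :: "'a set \<Rightarrow> ('a \<Rightarrow> 'a \<Rightarrow> bool) \<Rightarrow> 'a set \<Rightarrow> 'a set set" where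
  "unfilled_components V E F =
     {C. \<exists>v \<in> V - F. C = {w. (\<lambda>x y. x \<in> V - F \<and> y \<in> V - F \<and> E x y)\<^sup>*\<^sup>* v w}}"

text \<open>zq_win V E q F t: from filled set F, with t tokens left, the player can
  guarantee to fill all vertices in the Z_q-game, whatever the adversary answers.\<close>
inductive zq_win :: "'a set \<Rightarrow> ('a \<Rightarrow> 'a \<Rightarrow> bool) \<Rightarrow> nat \<Rightarrow> 'a set \<Rightarrow> nat \<Rightarrow> bool"
  for V E q where
  finished: "V \<subseteq> F \<Longrightarrow> zq_win V E q F t"
| token: "v \<in> V \<Longrightarrow> v \<notin> F \<Longrightarrow> zq_win V E q (insert v F) t \<Longrightarrow> zq_win V E q F (Suc t)"
| fill: "fill_step V E F F' \<Longrightarrow> zq_win V E q F' t \<Longrightarrow> zq_win V E q F t"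
| query: "S \<subseteq> unfilled_components V E F \<Longrightarrow> finite S \<Longrightarrow> card S \<ge> q + 1 \<Longrightarrow>
    (\<forall>R. R \<subseteq> S \<longrightarrow> R \<noteq> {} \<longrightarrow>
        (\<exists>F'. (fill_step (F \<union> \<Union>R) E)\<^sup>*\<^sup>* F F' \<and> zq_win V E q F' t)) \<Longrightarrow>
    zq_win V E q F t"

inductive z_win :: "'a set \<Rightarrow> ('a \<Rightarrow> 'a \<Rightarrow> bool) \<Rightarrow> 'a set \<Rightarrow> nat \<Rightarrow> bool"
  for V E where
  finished: "V \<subseteq> F \<Longrightarrow> z_win V E F t"
| token: "v \<in> V \<Longrightarrow> v \<notin> F \<Longrightarrow> z_win V E (insert v F) t \<Longrightarrow> z_win V E F (Suc t)"
| fill: "fill_step V E F F' \<Longrightarrow> z_win V E F' t \<Longrightarrow> z_win V E F t"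

definition Zq :: "'a set \<Rightarrow> ('a \<Rightarrow> 'a \<Rightarrow> bool) \<Rightarrow> nat \<Rightarrow> nat" where
  "Zq V E q = (LEAST t. zq_win V E q {} t)"

definition Z :: "'a set \<Rightarrow> ('a \<Rightarrow> 'a \<Rightarrow> bool) \<Rightarrow> nat" where
  "Z V E = (LEAST t. z_win V E {} t)"

end

theory Submission
  imports Defs
begin

text \<open>Call a filled vertex active if it still has an unfilled neighbour. From a position
  whose number of active vertices plus remaining tokens is at most q, a query of q + 1
  components is useless: by a counting argument the oracle can return a nonempty family
  of them in which no active vertex sees exactly one unfilled neighbour, so the filling
  rule in the returned subgraph does nothing. Tokens and ordinary forcing steps raise the
  number of active vertices by at most the tokens spent, so this bound persists along any
  winning Z_q-strategy from the empty start; dropping its queries leaves a winning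
  Z-strategy with the same number of tokens.\<close>

definition active_vertices :: "('a \<Rightarrow> 'a \<Rightarrow> bool) \<Rightarrow> 'a set \<Rightarrow> 'a set" where
  "active_vertices E F = {u \<in> F. \<exists>x. E u x \<and> x \<notin> F}"

lemma active_vertices_empty [simp]: "active_vertices E {} = {}"
  unfolding active_vertices_def by simp

lemma finite_active_vertices:
  assumes "simple_graph V E"
  shows "finite (active_vertices E F)"
proof -
  have "active_vertices E F \<subseteq> V"
    using assms unfolding active_vertices_def simple_graph_def by blast
  then show ?thesis
    using assms unfolding simple_graph_def by (blast intro: finite_subset)
qed

lemma card_active_vertices_insert:
  assumes "simple_graph V E"
  shows "card (active_vertices E (insert v F)) \<le> Suc (card (active_vertices E F))"
proof -
  have "active_vertices E (insert v F) \<subseteq> insert v (active_vertices E F)"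
    unfolding active_vertices_def by auto
  then have "card (active_vertices E (insert v F)) \<le> card (insert v (active_vertices E F))"
    using finite_active_vertices[OF assms] by (intro card_mono) auto
  also have "\<dots> \<le> Suc (card (active_vertices E F))"
    using finite_active_vertices[OF assms] by (simp add: card_insert_if)
  finally show ?thesis .
qed

text \<open>The forcing vertex stops being active while the forced vertex may become active.\<close>

lemma card_active_vertices_fill_step:
  assumes G: "simple_graph V E" and step: "fill_step V E F F'"
  shows "card (active_vertices E F') \<le> card (active_vertices E F)"
proof -
  obtain u w where uw: "u \<in> F" "w \<notin> F" "{x \<in> V. E u x \<and> x \<notin> F} = {w}" "F' = insert w F"
    using step unfolding fill_step_def by blast
  have nbrs_in_V: "E u x \<Longrightarrow> x \<in> V" for x
    using G unfolding simple_graph_def by blast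
  have u_active: "u \<in> active_vertices E F"
    using uw unfolding active_vertices_def by blast
  have "active_vertices E F' \<subseteq> insert w (active_vertices E F - {u})"
    using uw nbrs_in_V unfolding active_vertices_def by blast
  then have "card (active_vertices E F') \<le> card (insert w (active_vertices E F - {u}))"
    using finite_active_vertices[OF G] by (intro card_mono) auto
  also have "\<dots> \<le> Suc (card (active_vertices E F - {u}))"
    using finite_active_vertices[OF G] by (simp add: card_insert_if)
  also have "\<dots> = card (active_vertices E F)"
    using card_Suc_Diff1[OF finite_active_vertices[OF G] u_active] .
  finally show ?thesis .
qed

lemma pairwise_disjnt_unfilled_components:
  assumes "simple_graph V E"
  shows "pairwise disjnt (unfilled_components V E F)"
proof (rule pairwiseI, rule ccontr)
  define r where "r = (\<lambda>x y. x \<in> V - F \<and> y \<in> V - F \<and> E x y)"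
  have "symp r"
    using assms unfolding r_def simple_graph_def by (auto intro: sympI)
  then have sym: "r\<^sup>*\<^sup>* x y \<Longrightarrow> r\<^sup>*\<^sup>* y x" for x y
    by (meson symp_rtranclp sympD)
  fix U U' assume U: "U \<in> unfilled_components V E F" and U': "U' \<in> unfilled_components V E F"
    and "U \<noteq> U'" and "\<not> disjnt U U'"
  obtain v v' where v: "U = {w. r\<^sup>*\<^sup>* v w}" and v': "U' = {w. r\<^sup>*\<^sup>* v' w}"
    using U U' unfolding unfilled_components_def r_def by blast
  obtain x where "r\<^sup>*\<^sup>* v x" "r\<^sup>*\<^sup>* v' x"
    using \<open>\<not> disjnt U U'\<close> unfolding v v' disjnt_def by blast
  then have "r\<^sup>*\<^sup>* v v'" "r\<^sup>*\<^sup>* v' v"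
    by (meson sym rtranclp_trans)+
  then have "U = U'"
    unfolding v v' by (auto intro: rtranclp_trans)
  with \<open>U \<noteq> U'\<close> show False ..
qed

text \<open>If some point sees exactly one element w, discard that point together with the
  unique block containing w; by disjointness the point then sees nothing at all.\<close>

lemma disjoint_family_avoids_singletons:
  assumes "pairwise disjnt S" and "finite S" and "finite A" and "card A < card S"
  shows "\<exists>R \<subseteq> S. R \<noteq> {} \<and> (\<forall>u \<in> A. \<forall>w. N u \<inter> \<Union>R \<noteq> {w})"
  using assms
proof (induction "card S" arbitrary: S A rule: less_induct)
  case less
  show ?case
  proof (cases "\<forall>u \<in> A. \<forall>w. N u \<inter> \<Union>S \<noteq> {w}")
    case True
    moreover have "S \<noteq> {}"
      using less.prems(4) by auto
    ultimately show ?thesis by blast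
  next
    case False
    then obtain u w where u: "u \<in> A" and uw: "N u \<inter> \<Union>S = {w}" by blast
    then obtain U where U: "U \<in> S" "w \<in> U" by blast
    have w_only_in_U: "w \<notin> \<Union>(S - {U})"
    proof
      assume "w \<in> \<Union>(S - {U})"
      then obtain U' where "U' \<in> S" "U' \<noteq> U" "w \<in> U'" by blast
      with U less.prems(1) show False
        unfolding pairwise_def disjnt_def by blast
    qed
    have "card A > 0"
      using less.prems(3) u by (auto simp: card_gt_0_iff)
    then have smaller: "card (A - {u}) < card (S - {U})"
      using less.prems(4) u U by (simp add: card_Diff_singleton)
    have "card (S - {U}) < card S"
      using less.prems(2) U(1) by (rule card_Diff1_less)
    moreover have "pairwise disjnt (S - {U})"
      using less.prems(1) by (rule pairwise_subset) auto
    ultimately obtain R where R: "R \<subseteq> S - {U}" "R \<noteq> {}"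
        and avoids: "\<forall>v \<in> A - {u}. \<forall>w. N v \<inter> \<Union>R \<noteq> {w}"
      using less.hyps[of "S - {U}" "A - {u}"] less.prems(2,3) smaller by auto
    have "\<Union>R \<subseteq> \<Union>S - {w}"
      using R(1) w_only_in_U by blast
    then have "N u \<inter> \<Union>R = {}"
      using uw by auto
    then have "\<forall>v \<in> A. \<forall>w. N v \<inter> \<Union>R \<noteq> {w}"
      using avoids by (metis DiffI empty_not_insert singletonD)
    with R show ?thesis by blast
  qed
qed

lemma query_can_be_blocked:
  assumes G: "simple_graph V E" and S: "S \<subseteq> unfilled_components V E F" "finite S"
    and few_active: "card (active_vertices E F) < card S"
  shows "\<exists>R \<subseteq> S. R \<noteq> {} \<and> (\<forall>F'. \<not> fill_step (F \<union> \<Union>R) E F F')"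
proof -
  have "pairwise disjnt S"
    using pairwise_disjnt_unfilled_components[OF G] S(1) by (rule pairwise_subset)
  then obtain R where R: "R \<subseteq> S" "R \<noteq> {}"
    and avoids: "\<forall>u \<in> active_vertices E F. \<forall>w. {x. E u x \<and> x \<notin> F} \<inter> \<Union>R \<noteq> {w}"
    using disjoint_family_avoids_singletons[where N="\<lambda>u. {x. E u x \<and> x \<notin> F}",
        OF _ S(2) finite_active_vertices[OF G] few_active]
    by auto
  have "\<not> fill_step (F \<union> \<Union>R) E F F'" for F'
  proof
    assume "fill_step (F \<union> \<Union>R) E F F'"
    then obtain u w where "u \<in> F" and single: "{x \<in> F \<union> \<Union>R. E u x \<and> x \<notin> F} = {w}"
      unfolding fill_step_def by blast
    then have "u \<in> active_vertices E F"
      unfolding active_vertices_def by blast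
    moreover have "{x. E u x \<and> x \<notin> F} \<inter> \<Union>R = {w}"
      using single by blast
    ultimately show False
      using avoids by blast
  qed
  with R show ?thesis by blast
qed

lemma zq_win_imp_z_win:
  assumes G: "simple_graph V E"
  shows "zq_win V E q F t \<Longrightarrow> card (active_vertices E F) + t \<le> q \<Longrightarrow> z_win V E F t"
proof (induction rule: zq_win.induct)
  case (finished F t)
  then show ?case by (simp add: z_win.finished)
next
  case (token v F t)
  then show ?case
    using card_active_vertices_insert[OF G, of v F] by (auto intro: z_win.token)
next
  case (fill F F' t)
  then show ?case
    using card_active_vertices_fill_step[OF G fill.hyps(1)] by (auto intro: z_win.fill)
next
  case (query S F t)
  have "card (active_vertices E F) < card S"
    using query.prems query.hyps(3) by linarith
  then obtain R where R: "R \<subseteq> S" "R \<noteq> {}" and stuck: "\<forall>F'. \<not> fill_step (F \<union> \<Union>R) E F F'"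
    using query_can_be_blocked[OF G query.hyps(1,2)] by blast
  then obtain F' where F': "(fill_step (F \<union> \<Union>R) E)\<^sup>*\<^sup>* F F'"
    and IH: "card (active_vertices E F') + t \<le> q \<longrightarrow> z_win V E F' t"
    using query.IH by blast
  have "F' = F"
    using F' stuck by (cases rule: converse_rtranclpE) auto
  with IH query.prems show ?case by simp
qed

lemma z_win_imp_zq_win: "z_win V E F t \<Longrightarrow> zq_win V E q F t"
  by (induction rule: z_win.induct) (auto intro: zq_win.intros)

lemma z_win_card_unfilled:
  assumes "finite V"
  shows "z_win V E F (card (V - F))"
proof (induction "card (V - F)" arbitrary: F rule: less_induct)
  case less
  show ?case
  proof (cases "V \<subseteq> F")
    case True
    then show ?thesis by (rule z_win.finished)
  next
    case False
    then obtain v where v: "v \<in> V" "v \<notin> F" by blast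
    have card_eq: "card (V - F) = Suc (card (V - insert v F))"
      using assms v by (metis Diff_insert card_Suc_Diff1 finite_Diff DiffI)
    then have "z_win V E (insert v F) (card (V - insert v F))"
      using less by simp
    then show ?thesis
      unfolding card_eq by (rule z_win.token[OF v])
  qed
qed

theorem theorem2p2:
  fixes V :: "'a set" and E :: "'a \<Rightarrow> 'a \<Rightarrow> bool" and k :: nat
  assumes "simple_graph V E"
    and "Zq V E k \<le> k"
  shows "Zq V E k = Z V E"
proof -
  have z_win_some: "z_win V E {} (card V)"
    using z_win_card_unfilled[of V E "{}"] assms(1) unfolding simple_graph_def by simp
  have "zq_win V E k {} (Zq V E k)"
    unfolding Zq_def using z_win_imp_zq_win[OF z_win_some] by (rule LeastI)
  then have "z_win V E {} (Zq V E k)"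
    using zq_win_imp_z_win[OF assms(1)] assms(2) by simp
  then have "Z V E \<le> Zq V E k"
    unfolding Z_def by (rule Least_le)
  moreover have "z_win V E {} (Z V E)"
    unfolding Z_def using z_win_some by (rule LeastI)
  then have "Zq V E k \<le> Z V E"
    unfolding Zq_def by (intro Least_le z_win_imp_zq_win)
  ultimately show ?thesis by simp
qed

end
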